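(* Let $n\ge 3$ and let $c=(c_1,\dots,c_n)\in\{-1,+1\}^n$ be such that the cyclic sequence $(c_1,\dots,c_n,-c_1,\dots,-c_n)$ of length $2n$ contains no $n-1$ cyclically consecutive equal entries. For real angles $\varphi_2,\dots,\varphi_n$ let $C(\varphi)$ be the real $2\times(n-1)$ matrix with columns indexed by $j=2,\dots,n$ and entries \[ C_{1j}=(c_j-c_{j-1})\sin\varphi_j,\qquad C_{2j}=(c_{j-1}-c_j)\cos\varphi_j . \] If $0<\varphi_2<\varphi_3<\dots<\varphi_n<\pi$, then $C(\varphi)$ has rank two.
   Context: $C(\varphi)$ is the Jacobian with respect to $(\varphi_2,\dots,\varphi_n)$ of the constraint functions $g_1(\varphi)=\sum_{j=2}^n (c_{j-1}-c_j)\cos\varphi_j-(c_1+c_n)$ and $g_2(\varphi)=\sum_{j=2}^n (c_{j-1}-c_j)\sin\varphi_j$. The hypothesis on $c$ expresses that $c$ is a code of a polygon (at most $n-2$ cyclically consecutive equal signs in the extended sequence of length $2n$). *)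

theory Defs
  imports "HOL-Analysis.Analysis" "Jordan_Normal_Form.DL_Rank"
begin

definition ext_seq :: "nat \<Rightarrow> (nat \<Rightarrow> int) \<Rightarrow> nat \<Rightarrow> int" where
  "ext_seq n c k = (if k < n then c (k + 1) else - c (k - n + 1))"

definition no_cyclic_run :: "nat \<Rightarrow> (nat \<Rightarrow> int) \<Rightarrow> nat \<Rightarrow> bool" where
  "no_cyclic_run n c m \<longleftrightarrow>
     \<not> (\<exists>i < 2 * n. \<forall>t < m. ext_seq n c ((i + t) mod (2 * n)) = ext_seq n c i)"

text \<open>The 2 x (n-1) matrix C(phi); column k (0-based) corresponds to j = k + 2.\<close>
definition C_mat :: "nat \<Rightarrow> (nat \<Rightarrow> int) \<Rightarrow> (nat \<Rightarrow> real) \<Rightarrow> real mat" where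
  "C_mat n c \<phi> = mat 2 (n - 1) (\<lambda>(i, k).
     (let j = k + 2 in
      if i = 0 then real_of_int (c j - c (j - 1)) * sin (\<phi> j)
      else real_of_int (c (j - 1) - c j) * cos (\<phi> j)))"

end

theory Submission
  imports Defs "Jordan_Normal_Form.DL_Rank_Submatrix"
begin

text \<open>
  Write d_j = c_j - c_(j-1). The columns j < k of C(phi) have the 2 x 2 minor
  d_j d_k sin (phi_k - phi_j), which is nonzero as soon as c changes sign at both j and k,
  because 0 < phi_k - phi_j < pi. So it suffices that c changes sign at least twice.
  If it changed sign at most once, say only at position j, then c_j, ..., c_n, -c_1, ..., -c_(j-1)
  would be n cyclically consecutive equal entries of the extended sequence.
\<close>

lemma det_dim_2:
  assumes "(A :: 'a :: comm_ring_1 mat) \<in> carrier_mat 2 2"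
  shows "det A = A $$ (0,0) * A $$ (1,1) - A $$ (0,1) * A $$ (1,0)"
proof -
  have "det A = A $$ (0,0) * cofactor A 0 0 + A $$ (0,1) * cofactor A 0 1"
    using laplace_expansion_row[OF assms, of 0] by (simp add: numeral_2_eq_2)
  moreover have "cofactor A 0 0 = A $$ (1,1)" "cofactor A 0 1 = - A $$ (1,0)"
    using assms by (auto simp: cofactor_def mat_delete_def det_single)
  ultimately show ?thesis by simp
qed

lemma (in vec_space) rank_le_dim_row:
  assumes "A \<in> carrier_mat n nc"
  shows "rank A \<le> n"
proof -
  have "subspace class_ring (span (set (cols A))) V"
    using span_is_subspace cols_dim assms by (metis carrier_matD(1))
  then show ?thesis
    unfolding rank_def using subspace_dim fin_dim fin_dim_span_cols[OF assms] dim_is_n by simp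
qed

lemma (in vec_space) rank_ge_2_if_minor_nonzero:
  assumes A: "A \<in> carrier_mat n nc" and rows: "i < i'" "i' < n" and cols: "k < k'" "k' < nc"
    and minor: "A $$ (i,k) * A $$ (i',k') - A $$ (i,k') * A $$ (i',k) \<noteq> 0"
  shows "2 \<le> rank A"
proof -
  let ?M = "submatrix A {i,i'} {k,k'}"
  have "{r. r < dim_row A \<and> r \<in> {i,i'}} = {i,i'}" "{j. j < dim_col A \<and> j \<in> {k,k'}} = {k,k'}"
    using A rows cols by auto
  then have card_rows: "card {r. r < dim_row A \<and> r \<in> {i,i'}} = 2"
    and card_cols: "card {j. j < dim_col A \<and> j \<in> {k,k'}} = 2"
    using rows cols by simp_all
  have M: "?M \<in> carrier_mat 2 2"
    by (rule carrier_matI) (simp_all only: dim_submatrix card_rows card_cols)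
  have before_first: "card {x\<in>{i,i'}. x < i} = 0" "card {x\<in>{k,k'}. x < k} = 0"
    using rows cols by auto
  have "{x\<in>{i,i'}. x < i'} = {i}" "{x\<in>{k,k'}. x < k'} = {k}"
    using rows cols by auto
  then have before_second: "card {x\<in>{i,i'}. x < i'} = 1" "card {x\<in>{k,k'}. x < k'} = 1"
    by simp_all
  have entry: "?M $$ (card {x\<in>{i,i'}. x < r}, card {x\<in>{k,k'}. x < j}) = A $$ (r,j)"
    if "r \<in> {i,i'}" "j \<in> {k,k'}" for r j
    using that A rows cols by (intro submatrix_index_card) auto
  have "?M $$ (0,0) = A $$ (i,k)" "?M $$ (0,1) = A $$ (i,k')"
    "?M $$ (1,0) = A $$ (i',k)" "?M $$ (1,1) = A $$ (i',k')"
    using entry[of i k] entry[of i k'] entry[of i' k] entry[of i' k']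
    unfolding before_first before_second by simp_all
  then have "det ?M = A $$ (i,k) * A $$ (i',k') - A $$ (i,k') * A $$ (i',k)"
    using det_dim_2[OF M] by simp
  with minor have "card {j. j < nc \<and> j \<in> {k,k'}} \<le> rank A"
    by (intro rank_gt_minor[OF A, of "{i,i'}"]) simp
  with card_cols A show ?thesis by simp
qed

lemma eq_on_interval_if_Suc_eq:
  assumes "\<And>k. m \<le> k \<Longrightarrow> k < n \<Longrightarrow> f (Suc k) = f k" and "m \<le> k" "k \<le> n"
  shows "f k = f m"
  using assms(2,3) by (induction k rule: dec_induct) (auto simp: assms(1))

lemma less_on_interval_if_Suc_less:
  fixes f :: "nat \<Rightarrow> 'a :: order"
  assumes "\<And>k. m \<le> k \<Longrightarrow> k < n \<Longrightarrow> f k < f (Suc k)" and "m \<le> i" "i < j" "j \<le> n"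
  shows "f i < f j"
proof -
  have "Suc i \<le> j" using \<open>i < j\<close> by simp
  then show ?thesis
    using \<open>j \<le> n\<close>
  proof (induction j rule: dec_induct)
    case base
    then show ?case using assms(1,2) by simp
  next
    case (step k)
    then have "f i < f k" by simp
    also have "f k < f (Suc k)" using assms(1,2) step by simp
    finally show ?case .
  qed
qed

lemma no_cyclic_run_mono: "no_cyclic_run n c m \<Longrightarrow> m \<le> m' \<Longrightarrow> no_cyclic_run n c m'"
  unfolding no_cyclic_run_def by (meson less_le_trans)

lemma cyclic_run_if_one_sign_change:
  fixes c :: "nat \<Rightarrow> int"
  assumes signs: "\<forall>j \<in> {1..n}. c j = 1 \<or> c j = -1"
    and j: "1 \<le> j" "j \<le> n"
    and changes: "\<And>k. 2 \<le> k \<Longrightarrow> k \<le> n \<Longrightarrow> c k \<noteq> c (k - 1) \<longleftrightarrow> k = j"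
  shows "\<not> no_cyclic_run n c n"
proof -
  have tail: "c k = c j" if "j \<le> k" "k \<le> n" for k
  proof (rule eq_on_interval_if_Suc_eq[OF _ that])
    show "c (Suc k') = c k'" if "j \<le> k'" "k' < n" for k'
      using changes[of "Suc k'"] j that by auto
  qed
  have head: "c k = c 1" if "1 \<le> k" "k \<le> j - 1" for k
  proof (rule eq_on_interval_if_Suc_eq[OF _ that])
    show "c (Suc k') = c k'" if "1 \<le> k'" "k' < j - 1" for k'
    proof -
      have "2 \<le> Suc k'" "Suc k' \<le> n" "Suc k' \<noteq> j" using j that by auto
      then show ?thesis using changes[of "Suc k'"] by simp
    qed
  qed
  have flip: "c j = - c 1" if "2 \<le> j"
  proof -
    have "c j \<noteq> c (j - 1)" "c (j - 1) = c 1" using changes[of j] head[of "j - 1"] j that by auto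
    moreover have "c j = 1 \<or> c j = -1" "c (j - 1) = 1 \<or> c (j - 1) = -1"
      using signs j that by (simp, force)
    ultimately show ?thesis by auto
  qed
  have "ext_seq n c ((j - 1 + t) mod (2 * n)) = ext_seq n c (j - 1)" if "t < n" for t
  proof -
    have "(j - 1 + t) mod (2 * n) = j - 1 + t" using j that by simp
    moreover have "ext_seq n c (j - 1) = c j"
      using j by (simp add: ext_seq_def less_eq_Suc_le)
    moreover have "ext_seq n c (j - 1 + t) = c j"
    proof (cases "j - 1 + t < n")
      case True
      then show ?thesis using tail[of "j + t"] j by (simp add: ext_seq_def)
    next
      case False
      moreover have "j - 1 + t - n + 1 = j + t - n" using False j by simp
      ultimately have "ext_seq n c (j - 1 + t) = - c (j + t - n)"
        by (simp only: ext_seq_def if_False)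
      then show ?thesis using False head[of "j + t - n"] flip j that by simp
    qed
    ultimately show ?thesis by simp
  qed
  moreover have "j - 1 < 2 * n" using j by simp
  ultimately show ?thesis unfolding no_cyclic_run_def by blast
qed

lemma two_sign_changes:
  fixes c :: "nat \<Rightarrow> int"
  assumes "0 < n" and signs: "\<forall>j \<in> {1..n}. c j = 1 \<or> c j = -1" and "no_cyclic_run n c n"
  shows "\<exists>a b. 2 \<le> a \<and> a < b \<and> b \<le> n \<and> c a \<noteq> c (a - 1) \<and> c b \<noteq> c (b - 1)"
proof (rule ccontr)
  assume at_most_one: "\<not> ?thesis"
  obtain j where j: "1 \<le> j" "j \<le> n"
    and changes: "\<And>k. 2 \<le> k \<Longrightarrow> k \<le> n \<Longrightarrow> c k \<noteq> c (k - 1) \<longleftrightarrow> k = j"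
  proof (cases "\<exists>j \<in> {2..n}. c j \<noteq> c (j - 1)")
    case True
    then obtain j where j: "2 \<le> j" "j \<le> n" "c j \<noteq> c (j - 1)" by auto
    have "c k \<noteq> c (k - 1) \<longleftrightarrow> k = j" if k: "2 \<le> k" "k \<le> n" for k
    proof
      assume change: "c k \<noteq> c (k - 1)"
      show "k = j"
      proof (rule ccontr)
        assume "k \<noteq> j"
        then have "k < j \<or> j < k" by linarith
        then show False using at_most_one j k change by blast
      qed
    next
      assume "k = j"
      then show "c k \<noteq> c (k - 1)" using j by simp
    qed
    moreover have "1 \<le> j" using j by simp
    ultimately show ?thesis using j(2) that by blast
  next
    case False
    then show ?thesis using \<open>0 < n\<close> by (intro that[of 1]) auto
  qed
  have "\<not> no_cyclic_run n c n" by (rule cyclic_run_if_one_sign_change[OF signs j changes])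
  with \<open>no_cyclic_run n c n\<close> show False by contradiction
qed

lemma C_mat_column:
  assumes "2 \<le> j" "j \<le> n"
  shows "C_mat n c \<phi> $$ (0, j - 2) = of_int (c j - c (j - 1)) * sin (\<phi> j)"
    and "C_mat n c \<phi> $$ (1, j - 2) = - of_int (c j - c (j - 1)) * cos (\<phi> j)"
proof -
  have "j - 2 < n - 1" "j - 2 + 2 = j" "Suc (j - 2) = j - 1" using assms by auto
  then show "C_mat n c \<phi> $$ (0, j - 2) = of_int (c j - c (j - 1)) * sin (\<phi> j)"
    and "C_mat n c \<phi> $$ (1, j - 2) = - of_int (c j - c (j - 1)) * cos (\<phi> j)"
    by (simp_all add: C_mat_def)
qed

lemma C_mat_minor:
  assumes "2 \<le> a" "a \<le> n" "2 \<le> b" "b \<le> n"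
  shows "C_mat n c \<phi> $$ (0, a - 2) * C_mat n c \<phi> $$ (1, b - 2)
           - C_mat n c \<phi> $$ (0, b - 2) * C_mat n c \<phi> $$ (1, a - 2)
         = of_int ((c a - c (a - 1)) * (c b - c (b - 1))) * sin (\<phi> b - \<phi> a)"
  unfolding C_mat_column[OF assms(1,2)] C_mat_column[OF assms(3,4)]
  by (simp add: sin_diff algebra_simps)

theorem lemma2:
  fixes n :: nat and c :: "nat \<Rightarrow> int" and \<phi> :: "nat \<Rightarrow> real"
  assumes "n \<ge> 3"
    and "\<forall>j \<in> {1..n}. c j = 1 \<or> c j = -1"
    and "no_cyclic_run n c (n - 1)"
    and "0 < \<phi> 2"
    and "\<forall>j \<in> {2..<n}. \<phi> j < \<phi> (j + 1)"
    and "\<phi> n < pi"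
  shows "vec_space.rank 2 (C_mat n c \<phi>) = 2"
proof -
  have C: "C_mat n c \<phi> \<in> carrier_mat 2 (n - 1)" by (simp add: C_mat_def)
  have "0 < n" "no_cyclic_run n c n" using assms(1) no_cyclic_run_mono[OF assms(3)] by simp_all
  then obtain a b where ab: "2 \<le> a" "a < b" "b \<le> n"
    and changes: "c a \<noteq> c (a - 1)" "c b \<noteq> c (b - 1)"
    using two_sign_changes[OF _ assms(2)] by blast
  have \<phi>_less: "\<phi> i < \<phi> j" if "2 \<le> i" "i < j" "j \<le> n" for i j
    using less_on_interval_if_Suc_less[of 2 n \<phi>] assms(5) that by simp
  have "\<phi> 2 \<le> \<phi> a" "\<phi> b \<le> \<phi> n"
    using \<phi>_less[of 2 a] \<phi>_less[of b n] ab by (cases "a = 2"; cases "b = n"; simp)+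
  then have "sin (\<phi> b - \<phi> a) > 0"
    using \<phi>_less[of a b] ab assms(4,6) by (intro sin_gt_zero) simp_all
  then have minor: "C_mat n c \<phi> $$ (0, a - 2) * C_mat n c \<phi> $$ (1, b - 2)
      - C_mat n c \<phi> $$ (0, b - 2) * C_mat n c \<phi> $$ (1, a - 2) \<noteq> 0"
    using C_mat_minor[of a n b c \<phi>] ab changes by simp
  have "2 \<le> vec_space.rank 2 (C_mat n c \<phi>)"
    by (rule vec_space.rank_ge_2_if_minor_nonzero[OF C _ _ _ _ minor]) (use ab in simp_all)
  with vec_space.rank_le_dim_row[OF C] show ?thesis by simp
qed

end
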